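(* Let $\hat R$ be the $4\times 4$ matrix $$\hat R=\begin{pmatrix}1&0&0&1\\0&1&-1&0\\0&1&1&0\\-1&0&0&1\end{pmatrix},$$ let $c$ be a complex-valued function on a multiplicatively closed set $G\subseteq\mathbb C\setminus\{0\}$ (e.g. $G=\mathbb C\setminus\{0\}$), and set $\hat R(x)=I+c(x)\hat R$. Then for all $x,y\in G$, $$\hat R_{(12)}(x)\hat R_{(23)}(xy)\hat R_{(12)}(y)-\hat R_{(23)}(y)\hat R_{(12)}(xy)\hat R_{(23)}(x)=\big(c(x)+c(y)+2c(x)c(y)-c(xy)\big)\big(\hat R_{(12)}-\hat R_{(23)}\big).$$ Consequently $\hat R(x)$ satisfies the parametrised Yang–Baxter equation $\hat R_{(12)}(x)\hat R_{(23)}(xy)\hat R_{(12)}(y)=\hat R_{(23)}(y)\hat R_{(12)}(xy)\hat R_{(23)}(x)$ for all $x,y\in G$ if and only if $c(x)+c(y)+2c(x)c(y)=c(xy)$ for all $x,y\in G$; in particular this holds for $c(x)=\tfrac12(x^p-1)$ for any integer $p$.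
   Context: $I$ is the identity matrix of the relevant size. For a $4\times4$ matrix $A$ acting on $\mathbb C^2\otimes\mathbb C^2$ (basis ordered $e_1\otimes e_1,e_1\otimes e_2,e_2\otimes e_1,e_2\otimes e_2$), $A_{(12)}=A\otimes I_2$ and $A_{(23)}=I_2\otimes A$ acting on $(\mathbb C^2)^{\otimes 3}$. *)

theory Defs
  imports "Jordan_Normal_Form.Matrix" Complex_Main
begin

text \<open>Kronecker (tensor) product of matrices; basis of C^2 (x) C^2 ordered
  e1e1, e1e2, e2e1, e2e2, i.e. index 2*a + b.\<close>
definition kron :: "complex mat \<Rightarrow> complex mat \<Rightarrow> complex mat" where
  "kron A B = mat (dim_row A * dim_row B) (dim_col A * dim_col B)
     (\<lambda>(i,j). A $$ (i div dim_row B, j div dim_col B) * B $$ (i mod dim_row B, j mod dim_col B))"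

definition Rhat :: "complex mat" where
  "Rhat = mat_of_rows_list 4 [[1,0,0,1],[0,1,-1,0],[0,1,1,0],[-1,0,0,1]]"

definition Rpar :: "(complex \<Rightarrow> complex) \<Rightarrow> complex \<Rightarrow> complex mat" where
  "Rpar c x = 1\<^sub>m 4 + c x \<cdot>\<^sub>m Rhat"

definition op12 :: "complex mat \<Rightarrow> complex mat" where
  "op12 A = kron A (1\<^sub>m 2)"

definition op23 :: "complex mat \<Rightarrow> complex mat" where
  "op23 A = kron (1\<^sub>m 2) A"

end

theory Submission
  imports Defs
begin

text \<open>Write \<open>Rhat = 1 + J\<close> with \<open>J = \<sigma>\<^sub>x \<otimes> i\<sigma>\<^sub>y\<close>. Then \<open>J\<^sup>2 = -1\<close>, and the two
  embeddings \<open>J \<otimes> 1\<close> and \<open>1 \<otimes> J\<close> anticommute because \<open>\<sigma>\<^sub>x\<close> and \<open>i\<sigma>\<^sub>y\<close> do.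
  Hence \<open>P = Rhat\<^sub>1\<^sub>2\<close> and \<open>Q = Rhat\<^sub>2\<^sub>3\<close> satisfy the Hecke relations
  \<open>P\<^sup>2 = 2P - 2\<close>, \<open>Q\<^sup>2 = 2Q - 2\<close> and the braid relation \<open>PQP = QPQ\<close>. For any such pair
  the difference \<open>(1 + aP)(1 + eQ)(1 + bP) - (1 + bQ)(1 + eP)(1 + aQ)\<close> collapses to
  \<open>(a + b + 2ab - e)(P - Q)\<close>, and \<open>P \<noteq> Q\<close>, so the parametrised Yang-Baxter equation is
  equivalent to the functional equation. For \<open>c(x) = (x\<^sup>p - 1)/2\<close> that equation says that
  \<open>1 + 2c = x\<^sup>p\<close> is multiplicative.\<close>

lemma mod_less_of_less_mult: "i < m * n \<Longrightarrow> i mod n < (n::nat)"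
  by (cases n) auto

lemma mod_mult_div_eq: "i mod (b * c) div c = i div c mod (b::nat)"
  by (metis add.right_neutral div_mult_self4 mod_by_0 mod_div_trivial mod_mult2_eq
      mod_mult_self1_is_0 mult.commute)

lemma sum_lessThan_mult_split:
  "(\<Sum>k<m * q. f k) = (\<Sum>u<m. \<Sum>v<q. f (u * q + v :: nat))"
proof -
  have "sum f {u * q..<u * q + q} = (\<Sum>v<q. f (u * q + v))" for u
    using sum.shift_bounds_nat_ivl[where g = f and m = 0 and k = "u * q" and n = q]
    by (simp add: atLeast0LessThan add.commute)
  then show ?thesis
    by (simp add: sum.nat_group[symmetric])
qed

lemma dim_row_kron [simp]: "dim_row (kron A B) = dim_row A * dim_row B"
  and dim_col_kron [simp]: "dim_col (kron A B) = dim_col A * dim_col B"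
  by (simp_all add: kron_def)

lemma index_kron [simp]:
  "i < dim_row A * dim_row B \<Longrightarrow> j < dim_col A * dim_col B \<Longrightarrow>
   kron A B $$ (i, j) = A $$ (i div dim_row B, j div dim_col B) * B $$ (i mod dim_row B, j mod dim_col B)"
  by (simp add: kron_def)

lemma kron_one: "kron (1\<^sub>m n) (1\<^sub>m m) = 1\<^sub>m (n * m)"
proof (rule eq_matI)
  fix i j assume "i < dim_row (1\<^sub>m (n * m))" "j < dim_col (1\<^sub>m (n * m))"
  then have ij: "i < n * m" "j < n * m" by simp_all
  then have "0 < m" by (cases m) auto
  with ij show "kron (1\<^sub>m n) (1\<^sub>m m) $$ (i, j) = 1\<^sub>m (n * m) $$ (i, j)"
    by (auto simp: less_mult_imp_div_less) (metis div_mult_mod_eq)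
qed simp_all

lemma kron_add_left:
  "A \<in> carrier_mat n m \<Longrightarrow> B \<in> carrier_mat n m \<Longrightarrow> kron (A + B) C = kron A C + kron B C"
  by (rule eq_matI) (simp_all add: less_mult_imp_div_less algebra_simps)

lemma kron_add_right:
  "A \<in> carrier_mat n m \<Longrightarrow> B \<in> carrier_mat n m \<Longrightarrow> kron C (A + B) = kron C A + kron C B"
  by (rule eq_matI) (auto simp: mod_less_of_less_mult algebra_simps)

lemma kron_smult_left: "kron (a \<cdot>\<^sub>m A) B = a \<cdot>\<^sub>m kron A B"
  by (rule eq_matI) (simp_all add: less_mult_imp_div_less)

lemma kron_smult_right: "kron A (a \<cdot>\<^sub>m B) = a \<cdot>\<^sub>m kron A B"
  by (rule eq_matI) (auto simp: mod_less_of_less_mult)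

lemma kron_uminus_left: "kron (- A) B = - kron A B"
  by (rule eq_matI) (simp_all add: less_mult_imp_div_less)

lemma kron_uminus_right: "kron A (- B) = - kron A B"
  by (rule eq_matI) (auto simp: mod_less_of_less_mult)

lemma kron_mult:
  assumes "dim_col A = dim_row C" and "dim_col B = dim_row D"
  shows "kron A B * kron C D = kron (A * C) (B * D)"
proof (rule eq_matI)
  fix i j assume "i < dim_row (kron (A * C) (B * D))" "j < dim_col (kron (A * C) (B * D))"
  then have i: "i < dim_row A * dim_row B" and j: "j < dim_col C * dim_col D" by simp_all
  have pos: "0 < dim_row B" "0 < dim_col D" using i j by (cases "dim_row B"; cases "dim_col D"; simp)+
  have [simp]: "i div dim_row B < dim_row A" "i mod dim_row B < dim_row B"
    using i pos by (auto simp: less_mult_imp_div_less)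
  have [simp]: "j div dim_col D < dim_col C" "j mod dim_col D < dim_col D"
    using j pos by (auto simp: less_mult_imp_div_less)
  let ?i1 = "i div dim_row B" and ?i2 = "i mod dim_row B"
  let ?j1 = "j div dim_col D" and ?j2 = "j mod dim_col D"
  have "(kron A B * kron C D) $$ (i, j)
      = (\<Sum>k < dim_col A * dim_col B. kron A B $$ (i, k) * kron C D $$ (k, j))"
    using i j assms by (auto simp: scalar_prod_def atLeast0LessThan intro!: sum.cong)
  also have "\<dots> = (\<Sum>u < dim_col A. \<Sum>v < dim_col B.
      (A $$ (?i1, u) * C $$ (u, ?j1)) * (B $$ (?i2, v) * D $$ (v, ?j2)))"
    using i j assms by (simp add: sum_lessThan_mult_split less_mult_imp_div_less ac_simps)
  also have "\<dots> = (A * C) $$ (?i1, ?j1) * (B * D) $$ (?i2, ?j2)"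
    using assms by (simp add: scalar_prod_def atLeast0LessThan sum_product)
  finally show "(kron A B * kron C D) $$ (i, j) = kron (A * C) (B * D) $$ (i, j)"
    using i j by simp
qed (simp_all add: assms)

lemma kron_assoc: "kron (kron A B) C = kron A (kron B C)"
proof (rule eq_matI)
  fix i j assume "i < dim_row (kron A (kron B C))" "j < dim_col (kron A (kron B C))"
  then have i: "i < dim_row A * (dim_row B * dim_row C)" and j: "j < dim_col A * (dim_col B * dim_col C)"
    by simp_all
  have "i div dim_row C < dim_row A * dim_row B" "j div dim_col C < dim_col A * dim_col B"
    using i j by (simp_all add: less_mult_imp_div_less ac_simps)
  moreover have "i mod (dim_row B * dim_row C) < dim_row B * dim_row C"
    "j mod (dim_col B * dim_col C) < dim_col B * dim_col C"
    using i j by (simp_all add: mod_less_of_less_mult)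
  ultimately show "kron (kron A B) C $$ (i, j) = kron A (kron B C) $$ (i, j)"
    using i j by (simp add: div_mult2_eq[symmetric] mod_mult_div_eq mod_mod_cancel ac_simps)
qed (simp_all add: ac_simps)

lemma minus_mat_eq_zero_iff:
  fixes A B :: "'a::ab_group_add mat"
  assumes "A \<in> carrier_mat n m" and "B \<in> carrier_mat n m"
  shows "A - B = 0\<^sub>m n m \<longleftrightarrow> A = B"
  using assms by (auto simp: mat_eq_iff)

lemma smult_mat_eq_zero_iff:
  fixes A :: "'a::idom mat"
  assumes "A \<in> carrier_mat n m"
  shows "k \<cdot>\<^sub>m A = 0\<^sub>m n m \<longleftrightarrow> k = 0 \<or> A = 0\<^sub>m n m"
  using assms by (auto simp: mat_eq_iff)

lemma hecke_triple_product:
  fixes P Q :: "'a::comm_ring_1 mat"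
  assumes P: "P \<in> carrier_mat n n" and Q: "Q \<in> carrier_mat n n"
    and P2: "P * P = s \<cdot>\<^sub>m P + t \<cdot>\<^sub>m 1\<^sub>m n"
  shows "(1\<^sub>m n + a \<cdot>\<^sub>m P) * (1\<^sub>m n + e \<cdot>\<^sub>m Q) * (1\<^sub>m n + b \<cdot>\<^sub>m P)
       = (1 + a * b * t) \<cdot>\<^sub>m 1\<^sub>m n + (a + b + a * b * s) \<cdot>\<^sub>m P + e \<cdot>\<^sub>m Q
         + (a * e) \<cdot>\<^sub>m (P * Q) + (b * e) \<cdot>\<^sub>m (Q * P) + (a * b * e) \<cdot>\<^sub>m (P * Q * P)"
  using P Q
  by (simp add: P2 add_mult_distrib_mat[of _ n n _ _ n] mult_add_distrib_mat[of _ n n _ n]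
      mult_smult_assoc_mat[of _ n n _ n] mult_smult_distrib[of _ n n _ n])
    (rule eq_matI; simp add: algebra_simps)

lemma hecke_ybe_difference:
  fixes P Q :: "'a::comm_ring_1 mat"
  assumes P: "P \<in> carrier_mat n n" and Q: "Q \<in> carrier_mat n n"
    and P2: "P * P = s \<cdot>\<^sub>m P + t \<cdot>\<^sub>m 1\<^sub>m n" and Q2: "Q * Q = s \<cdot>\<^sub>m Q + t \<cdot>\<^sub>m 1\<^sub>m n"
    and braid: "P * Q * P = Q * P * Q"
  shows "(1\<^sub>m n + a \<cdot>\<^sub>m P) * (1\<^sub>m n + e \<cdot>\<^sub>m Q) * (1\<^sub>m n + b \<cdot>\<^sub>m P)
       - (1\<^sub>m n + b \<cdot>\<^sub>m Q) * (1\<^sub>m n + e \<cdot>\<^sub>m P) * (1\<^sub>m n + a \<cdot>\<^sub>m Q)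
       = (a + b + s * a * b - e) \<cdot>\<^sub>m (P - Q)"
  unfolding hecke_triple_product[OF P Q P2] hecke_triple_product[OF Q P Q2] braid
  using P Q by (intro eq_matI) (auto simp: algebra_simps)

lemma hecke_of_square_eq_minus_one:
  fixes A :: "'a::comm_ring_1 mat"
  assumes A: "A \<in> carrier_mat n n" and A2: "A * A = - 1\<^sub>m n"
  shows "(1\<^sub>m n + A) * (1\<^sub>m n + A) = 2 \<cdot>\<^sub>m (1\<^sub>m n + A) + (- 2) \<cdot>\<^sub>m 1\<^sub>m n"
  using A by (simp add: add_mult_distrib_mat[of _ n n _ _ n] mult_add_distrib_mat[of _ n n _ n] A2)
    (rule eq_matI; simp)

lemma braid_of_anticommuting_square_roots:
  fixes A B :: "'a::comm_ring_1 mat"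
  assumes A: "A \<in> carrier_mat n n" and B: "B \<in> carrier_mat n n"
    and A2: "A * A = - 1\<^sub>m n" and B2: "B * B = - 1\<^sub>m n" and AB: "A * B = - (B * A)"
  shows "(1\<^sub>m n + A) * (1\<^sub>m n + B) * (1\<^sub>m n + A) = (1\<^sub>m n + B) * (1\<^sub>m n + A) * (1\<^sub>m n + B)"
proof -
  have ABA: "A * (B * A) = B"
    using A B by (simp add: assoc_mult_mat[of A n n B n A n, symmetric] AB A2)
  have BAB: "B * (A * B) = A"
    using A B by (simp add: AB B2 assoc_mult_mat[of B n n B n A n, symmetric])
  show ?thesis
    using A B
    by (simp add: add_mult_distrib_mat[of _ n n _ _ n] mult_add_distrib_mat[of _ n n _ n] A2 B2 ABA BAB)
      (rule eq_matI; simp)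
qed

lemma op12_carrier_mat: "A \<in> carrier_mat 4 4 \<Longrightarrow> op12 A \<in> carrier_mat 8 8"
  and op23_carrier_mat: "A \<in> carrier_mat 4 4 \<Longrightarrow> op23 A \<in> carrier_mat 8 8"
  unfolding op12_def op23_def by (auto intro!: carrier_matI)

lemma op12_one: "op12 (1\<^sub>m 4) = 1\<^sub>m 8"
  and op23_one: "op23 (1\<^sub>m 4) = 1\<^sub>m 8"
  unfolding op12_def op23_def by (simp_all add: kron_one)

lemma op12_add: "A \<in> carrier_mat 4 4 \<Longrightarrow> B \<in> carrier_mat 4 4 \<Longrightarrow> op12 (A + B) = op12 A + op12 B"
  and op23_add: "A \<in> carrier_mat 4 4 \<Longrightarrow> B \<in> carrier_mat 4 4 \<Longrightarrow> op23 (A + B) = op23 A + op23 B"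
  unfolding op12_def op23_def by (simp_all add: kron_add_left kron_add_right)

lemma op12_smult: "op12 (a \<cdot>\<^sub>m A) = a \<cdot>\<^sub>m op12 A"
  and op23_smult: "op23 (a \<cdot>\<^sub>m A) = a \<cdot>\<^sub>m op23 A"
  unfolding op12_def op23_def by (simp_all add: kron_smult_left kron_smult_right)

lemma op12_uminus: "op12 (- A) = - op12 A"
  and op23_uminus: "op23 (- A) = - op23 A"
  unfolding op12_def op23_def by (simp_all add: kron_uminus_left kron_uminus_right)

lemma op12_mult: "A \<in> carrier_mat 4 4 \<Longrightarrow> B \<in> carrier_mat 4 4 \<Longrightarrow> op12 (A * B) = op12 A * op12 B"
  and op23_mult: "A \<in> carrier_mat 4 4 \<Longrightarrow> B \<in> carrier_mat 4 4 \<Longrightarrow> op23 (A * B) = op23 A * op23 B"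
  unfolding op12_def op23_def by (simp_all add: kron_mult)

lemma op12_op23_kron_anticommute:
  assumes A: "A \<in> carrier_mat 2 2" and B: "B \<in> carrier_mat 2 2" and BA: "B * A = - (A * B)"
  shows "op12 (kron A B) * op23 (kron A B) = - (op23 (kron A B) * op12 (kron A B))"
proof -
  have "op12 (kron A B) * op23 (kron A B) = kron A (kron (B * A) B)"
    unfolding op12_def op23_def kron_assoc using A B by (simp add: kron_mult)
  moreover have "op23 (kron A B) * op12 (kron A B) = kron A (kron (A * B) B)"
    unfolding op12_def op23_def kron_assoc using A B by (simp add: kron_mult)
  ultimately show ?thesis
    by (simp add: BA kron_uminus_left kron_uminus_right)
qed

definition sigma_x :: "complex mat" where
  "sigma_x = mat_of_rows_list 2 [[0, 1], [1, 0]]"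

definition i_sigma_y :: "complex mat" where
  "i_sigma_y = mat_of_rows_list 2 [[0, 1], [-1, 0]]"

lemma sigma_x_carrier_mat: "sigma_x \<in> carrier_mat 2 2"
  and i_sigma_y_carrier_mat: "i_sigma_y \<in> carrier_mat 2 2"
  by (intro carrier_matI; simp add: sigma_x_def i_sigma_y_def mat_of_rows_list_def)+

lemma index_sigma_x: "i < 2 \<Longrightarrow> j < 2 \<Longrightarrow> sigma_x $$ (i, j) = (if i = j then 0 else 1)"
  by (auto simp: sigma_x_def mat_of_rows_list_def numeral_2_eq_2 less_Suc_eq)

lemma index_i_sigma_y:
  "i < 2 \<Longrightarrow> j < 2 \<Longrightarrow> i_sigma_y $$ (i, j) = (if i = j then 0 else if i = 0 then 1 else -1)"
  by (auto simp: i_sigma_y_def mat_of_rows_list_def numeral_2_eq_2 less_Suc_eq)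

lemma sigma_x_square: "sigma_x * sigma_x = 1\<^sub>m 2"
  by (rule eq_matI)
    (auto simp: sigma_x_def mat_of_rows_list_def scalar_prod_def numeral_2_eq_2 less_Suc_eq)

lemma i_sigma_y_square: "i_sigma_y * i_sigma_y = - 1\<^sub>m 2"
  by (rule eq_matI)
    (auto simp: i_sigma_y_def mat_of_rows_list_def scalar_prod_def numeral_2_eq_2 less_Suc_eq)

lemma i_sigma_y_sigma_x_anticommute: "i_sigma_y * sigma_x = - (sigma_x * i_sigma_y)"
  by (rule eq_matI)
    (auto simp: sigma_x_def i_sigma_y_def mat_of_rows_list_def scalar_prod_def numeral_2_eq_2 less_Suc_eq)

definition Jhat :: "complex mat" where
  "Jhat = kron sigma_x i_sigma_y"

lemma Jhat_carrier_mat: "Jhat \<in> carrier_mat 4 4"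
  unfolding Jhat_def using sigma_x_carrier_mat i_sigma_y_carrier_mat by (auto intro!: carrier_matI)

lemma Jhat_square: "Jhat * Jhat = - 1\<^sub>m 4"
  unfolding Jhat_def using sigma_x_carrier_mat i_sigma_y_carrier_mat
  by (simp add: kron_mult sigma_x_square i_sigma_y_square kron_uminus_right kron_one)

lemma Rhat_eq_one_plus_Jhat: "Rhat = 1\<^sub>m 4 + Jhat"
  unfolding Jhat_def
proof (rule eq_matI)
  fix i j assume "i < dim_row (1\<^sub>m 4 + kron sigma_x i_sigma_y)"
    and "j < dim_col (1\<^sub>m 4 + kron sigma_x i_sigma_y)"
  then have "i \<in> {0, 1, 2, 3}" "j \<in> {0, 1, 2, 3}"
    using sigma_x_carrier_mat i_sigma_y_carrier_mat by auto
  then show "Rhat $$ (i, j) = (1\<^sub>m 4 + kron sigma_x i_sigma_y) $$ (i, j)"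
    using sigma_x_carrier_mat i_sigma_y_carrier_mat
    by (auto simp: Rhat_def index_sigma_x index_i_sigma_y mat_of_rows_list_def)
qed (use sigma_x_carrier_mat i_sigma_y_carrier_mat in \<open>simp_all add: Rhat_def mat_of_rows_list_def\<close>)

lemma Rhat_carrier_mat: "Rhat \<in> carrier_mat 4 4"
  unfolding Rhat_eq_one_plus_Jhat using Jhat_carrier_mat by simp

lemma op12_Jhat_square: "op12 Jhat * op12 Jhat = - 1\<^sub>m 8"
  and op23_Jhat_square: "op23 Jhat * op23 Jhat = - 1\<^sub>m 8"
  using Jhat_carrier_mat
  by (simp_all add: op12_mult[symmetric] op23_mult[symmetric] Jhat_square op12_uminus op23_uminus
      op12_one op23_one)

lemma op12_op23_Jhat_anticommute: "op12 Jhat * op23 Jhat = - (op23 Jhat * op12 Jhat)"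
  unfolding Jhat_def
  using sigma_x_carrier_mat i_sigma_y_carrier_mat i_sigma_y_sigma_x_anticommute
  by (rule op12_op23_kron_anticommute)

lemma op12_Rhat: "op12 Rhat = 1\<^sub>m 8 + op12 Jhat"
  and op23_Rhat: "op23 Rhat = 1\<^sub>m 8 + op23 Jhat"
  unfolding Rhat_eq_one_plus_Jhat using Jhat_carrier_mat
  by (simp_all add: op12_add op23_add op12_one op23_one)

lemma op12_Rhat_hecke: "op12 Rhat * op12 Rhat = 2 \<cdot>\<^sub>m op12 Rhat + (- 2) \<cdot>\<^sub>m 1\<^sub>m 8"
  and op23_Rhat_hecke: "op23 Rhat * op23 Rhat = 2 \<cdot>\<^sub>m op23 Rhat + (- 2) \<cdot>\<^sub>m 1\<^sub>m 8"
  unfolding op12_Rhat op23_Rhat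
  using Jhat_carrier_mat op12_Jhat_square op23_Jhat_square
  by (simp_all add: hecke_of_square_eq_minus_one op12_carrier_mat op23_carrier_mat)

lemma Rhat_braid: "op12 Rhat * op23 Rhat * op12 Rhat = op23 Rhat * op12 Rhat * op23 Rhat"
  unfolding op12_Rhat op23_Rhat
  using Jhat_carrier_mat
  by (intro braid_of_anticommuting_square_roots op12_carrier_mat op23_carrier_mat
      op12_Jhat_square op23_Jhat_square op12_op23_Jhat_anticommute)

lemma op12_Rpar: "op12 (Rpar c x) = 1\<^sub>m 8 + c x \<cdot>\<^sub>m op12 Rhat"
  and op23_Rpar: "op23 (Rpar c x) = 1\<^sub>m 8 + c x \<cdot>\<^sub>m op23 Rhat"
  unfolding Rpar_def using Rhat_carrier_mat
  by (simp_all add: op12_add op23_add op12_one op23_one op12_smult op23_smult)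

lemma Rpar_ybe_defect:
  "op12 (Rpar c x) * op23 (Rpar c (x*y)) * op12 (Rpar c y)
     - op23 (Rpar c y) * op12 (Rpar c (x*y)) * op23 (Rpar c x)
   = (c x + c y + 2 * c x * c y - c (x*y)) \<cdot>\<^sub>m (op12 Rhat - op23 Rhat)"
  unfolding op12_Rpar op23_Rpar
  by (rule hecke_ybe_difference[OF op12_carrier_mat[OF Rhat_carrier_mat]
        op23_carrier_mat[OF Rhat_carrier_mat] op12_Rhat_hecke op23_Rhat_hecke Rhat_braid])

lemma op12_Rhat_neq_op23_Rhat: "op12 Rhat \<noteq> op23 Rhat"
proof
  assume "op12 Rhat = op23 Rhat"
  then have "op12 Rhat $$ (0, 6) = op23 Rhat $$ (0, 6)" by simp
  then show False
    using Rhat_carrier_mat by (simp add: op12_def op23_def Rhat_def mat_of_rows_list_def)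
qed

lemma Rpar_ybe_iff:
  "op12 (Rpar c x) * op23 (Rpar c (x*y)) * op12 (Rpar c y)
     = op23 (Rpar c y) * op12 (Rpar c (x*y)) * op23 (Rpar c x)
   \<longleftrightarrow> c x + c y + 2 * c x * c y = c (x*y)"
  (is "?L = ?R \<longleftrightarrow> _")
proof -
  have op: "op12 (Rpar c z) \<in> carrier_mat 8 8" "op23 (Rpar c z) \<in> carrier_mat 8 8" for z
    unfolding Rpar_def using Rhat_carrier_mat by (simp_all add: op12_carrier_mat op23_carrier_mat)
  have LR: "?L \<in> carrier_mat 8 8" "?R \<in> carrier_mat 8 8"
    by (intro mult_carrier_mat[where n = 8] op)+
  have D: "op12 Rhat - op23 Rhat \<in> carrier_mat 8 8"
    using Rhat_carrier_mat by (intro minus_carrier_mat op23_carrier_mat)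
  have "?L = ?R \<longleftrightarrow> ?L - ?R = 0\<^sub>m 8 8"
    using minus_mat_eq_zero_iff[OF LR] by simp
  also have "\<dots> \<longleftrightarrow> c x + c y + 2 * c x * c y - c (x*y) = 0"
    unfolding Rpar_ybe_defect smult_mat_eq_zero_iff[OF D]
    using D Rhat_carrier_mat op12_Rhat_neq_op23_Rhat
    by (simp add: minus_mat_eq_zero_iff op12_carrier_mat op23_carrier_mat)
  finally show ?thesis by simp
qed

lemma powi_functional_equation:
  fixes x y :: "'a::field_char_0"
  shows "(x powi p - 1) / 2 + (y powi p - 1) / 2 + 2 * ((x powi p - 1) / 2) * ((y powi p - 1) / 2)
       = ((x * y) powi p - 1) / 2"
  by (simp add: power_int_mult_distrib field_simps)

theorem mainTheorem2:
  fixes G :: "complex set" and c :: "complex \<Rightarrow> complex"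
  assumes G0: "0 \<notin> G"
    and Gmult: "\<And>x y. x \<in> G \<Longrightarrow> y \<in> G \<Longrightarrow> x * y \<in> G"
  shows "(\<forall>x\<in>G. \<forall>y\<in>G.
            op12 (Rpar c x) * op23 (Rpar c (x*y)) * op12 (Rpar c y)
          - op23 (Rpar c y) * op12 (Rpar c (x*y)) * op23 (Rpar c x)
          = (c x + c y + 2 * c x * c y - c (x*y)) \<cdot>\<^sub>m (op12 Rhat - op23 Rhat))
       \<and> ((\<forall>x\<in>G. \<forall>y\<in>G.
            op12 (Rpar c x) * op23 (Rpar c (x*y)) * op12 (Rpar c y)
          = op23 (Rpar c y) * op12 (Rpar c (x*y)) * op23 (Rpar c x))
          \<longleftrightarrow> (\<forall>x\<in>G. \<forall>y\<in>G. c x + c y + 2 * c x * c y = c (x*y)))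
       \<and> (\<forall>p::int. let d = (\<lambda>x::complex. (x powi p - 1) / 2) in
            (\<forall>x\<in>G. \<forall>y\<in>G. d x + d y + 2 * d x * d y = d (x*y)) \<and>
            (\<forall>x\<in>G. \<forall>y\<in>G.
              op12 (Rpar d x) * op23 (Rpar d (x*y)) * op12 (Rpar d y)
            = op23 (Rpar d y) * op12 (Rpar d (x*y)) * op23 (Rpar d x)))"
  using Rpar_ybe_defect powi_functional_equation
  by (simp only: Rpar_ybe_iff Let_def) blast

end
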